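(* Let $(r_n),(R_n)$ be real sequences with $(r_n)$ bounded, and $(C_n),(D_n),(d_n)$ complex sequences with $\sum_n(|C_n|^2+|d_nD_n|^2)<\infty$. Assume there are $n'\in\mathbb{N}$, $\mu>0$, $\nu>1/2$ such that $|R_n|\le\mu n^{-\nu}(|C_n|^2+|d_nD_n|^2)^{1/2}$ for all $n\ge n'$. Then for every $n_0\ge n'$ and every $T>0$ there is $c(T)>0$ (depending on $T,\mu,\nu,\sup_n|r_n|$) such that $$\int_{-\infty}^{\infty}k^*(t)\Big|\sum_{n=n_0}^\infty R_ne^{r_nt}\Big|^2dt\le c(T)\sum_{n=n_0}^\infty\big(|C_n|^2+|d_nD_n|^2\big).$$
   Context: For $T>0$, $k^*(t):=\cos\big(\frac{\pi t}{2T}\big)$ for $|t|\le T$ and $k^*(t):=0$ for $|t|>T$. *)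

theory Defs
  imports "HOL-Analysis.Analysis"
begin

definition kstar :: "real \<Rightarrow> real \<Rightarrow> real" where
  "kstar T t = (if \<bar>t\<bar> \<le> T then cos (pi * t / (2 * T)) else 0)"

end

theory Submission
  imports Defs
begin

text \<open>Crude bound, which suffices: on \<open>[-T, T]\<close> each exponential is at most \<open>exp (\<rho> T)\<close>, so
  Cauchy--Schwarz against the square-summable weights \<open>n powr (-\<nu>)\<close> (here \<open>\<nu> > 1/2\<close> is used)
  bounds the square of the series uniformly by a multiple of \<open>\<Sum> |C n|\<^sup>2 + |d n D n|\<^sup>2\<close>; since
  \<open>0 \<le> kstar T \<le> 1\<close> vanishes outside \<open>[-T, T]\<close>, integrating costs a further factor \<open>2 T\<close>.\<close>

lemma Cauchy_Schwarz_suminf: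
  fixes x y :: "nat \<Rightarrow> real"
  assumes sx: "summable (\<lambda>n. (x n)\<^sup>2)" and sy: "summable (\<lambda>n. (y n)\<^sup>2)"
  shows "summable (\<lambda>n. x n * y n)"
    and "(\<Sum>n. x n * y n)\<^sup>2 \<le> (\<Sum>n. (x n)\<^sup>2) * (\<Sum>n. (y n)\<^sup>2)"
proof -
  have "\<bar>x n * y n\<bar> \<le> (x n)\<^sup>2 + (y n)\<^sup>2" for n
  proof -
    have "2 * (\<bar>x n\<bar> * \<bar>y n\<bar>) \<le> (x n)\<^sup>2 + (y n)\<^sup>2"
      using sum_squares_bound[of "\<bar>x n\<bar>" "\<bar>y n\<bar>"] by (simp add: mult.assoc)
    moreover have "0 \<le> \<bar>x n\<bar> * \<bar>y n\<bar>" by simp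
    ultimately show ?thesis unfolding abs_mult by linarith
  qed
  then have "summable (\<lambda>n. \<bar>x n * y n\<bar>)"
    by (intro summable_comparison_test[OF _ summable_add[OF sx sy]]) auto
  then show sxy: "summable (\<lambda>n. x n * y n)"
    by (rule summable_rabs_cancel)
  have lim: "(\<lambda>N. (\<Sum>n<N. x n * y n)\<^sup>2) \<longlonglongrightarrow> (\<Sum>n. x n * y n)\<^sup>2"
    using summable_LIMSEQ[OF sxy] by (intro tendsto_power)
  have partial_le: "(\<Sum>n<N. x n * y n)\<^sup>2 \<le> (\<Sum>n. (x n)\<^sup>2) * (\<Sum>n. (y n)\<^sup>2)" for N
  proof -
    have "(\<Sum>n<N. x n * y n)\<^sup>2 \<le> (\<Sum>n<N. (x n)\<^sup>2) * (\<Sum>n<N. (y n)\<^sup>2)"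
      by (rule Cauchy_Schwarz_ineq_sum)
    also have "\<dots> \<le> (\<Sum>n. (x n)\<^sup>2) * (\<Sum>n. (y n)\<^sup>2)"
      by (intro mult_mono sum_le_suminf sx sy suminf_nonneg) (auto simp: sum_nonneg)
    finally show ?thesis .
  qed
  show "(\<Sum>n. x n * y n)\<^sup>2 \<le> (\<Sum>n. (x n)\<^sup>2) * (\<Sum>n. (y n)\<^sup>2)"
    using partial_le by (intro LIMSEQ_le_const2[OF lim]) auto
qed

lemma summable_powr_neg_Suc:
  assumes "s > 1"
  shows "summable (\<lambda>k. real (Suc k) powr (-s))"
  using assms summable_Suc_iff[of "\<lambda>k. real k powr (-s)"]
  by (simp add: summable_real_powr_iff)

lemma suminf_shifted_powr_square_le:
  assumes "\<nu> > 1/2" and "n0 \<ge> 1"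
  shows "summable (\<lambda>k. (real (k + n0) powr (-\<nu>))\<^sup>2)"
    and "(\<Sum>k. (real (k + n0) powr (-\<nu>))\<^sup>2) \<le> (\<Sum>k. real (Suc k) powr (-2 * \<nu>))"
proof -
  have summ: "summable (\<lambda>k. real (Suc k) powr (-2 * \<nu>))"
    using assms(1) summable_powr_neg_Suc[of "2 * \<nu>"] by simp
  have le: "(real (k + n0) powr (-\<nu>))\<^sup>2 \<le> real (Suc k) powr (-2 * \<nu>)" for k
  proof -
    have "(real (k + n0) powr (-\<nu>))\<^sup>2 = real (k + n0) powr (-2 * \<nu>)"
      by (simp add: power2_eq_square powr_add[symmetric])
    also have "\<dots> \<le> real (Suc k) powr (-2 * \<nu>)"
      using assms by (intro powr_mono2') auto
    finally show ?thesis .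
  qed
  show summ': "summable (\<lambda>k. (real (k + n0) powr (-\<nu>))\<^sup>2)"
    by (rule summable_comparison_test[OF _ summ]) (use le in auto)
  show "(\<Sum>k. (real (k + n0) powr (-\<nu>))\<^sup>2) \<le> (\<Sum>k. real (Suc k) powr (-2 * \<nu>))"
    by (intro suminf_le summ summ' le)
qed

lemma kstar_nonneg: "kstar T t \<ge> 0"
proof (cases "\<bar>t\<bar> \<le> T")
  case True
  then have "\<bar>pi * t / (2 * T)\<bar> \<le> pi / 2"
    by (cases "T = 0") (simp_all add: abs_mult abs_divide divide_simps mult_left_mono)
  then have "pi * t / (2 * T) \<le> pi / 2 \<and> - (pi * t / (2 * T)) \<le> pi / 2"
    by (simp only: abs_le_iff)
  then have "-(pi / 2) \<le> pi * t / (2 * T)" and "pi * t / (2 * T) \<le> pi / 2"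
    by linarith+
  then have "cos (pi * t / (2 * T)) \<ge> 0"
    by (rule cos_ge_zero)
  then show ?thesis
    using True by (simp add: kstar_def)
qed (simp add: kstar_def)

lemma kstar_le_one: "kstar T t \<le> 1"
  by (simp add: kstar_def)

lemma nn_integral_kstar_mult_le:
  fixes f :: "real \<Rightarrow> real"
  assumes "T > 0" and "M \<ge> 0" and f_le: "\<And>t. \<bar>t\<bar> \<le> T \<Longrightarrow> f t \<le> M"
  shows "(\<integral>\<^sup>+ t. ennreal (kstar T t * f t) \<partial>lborel) \<le> ennreal (2 * T * M)"
proof -
  have "(\<integral>\<^sup>+ t. ennreal (kstar T t * f t) \<partial>lborel) \<le> (\<integral>\<^sup>+ t. ennreal M * indicator {-T..T} t \<partial>lborel)"
  proof (rule nn_integral_mono)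
    fix t
    show "ennreal (kstar T t * f t) \<le> ennreal M * indicator {-T..T} t"
    proof (cases "\<bar>t\<bar> \<le> T")
      case True
      have "kstar T t * f t \<le> M"
      proof (cases "f t \<ge> 0")
        case True
        then have "kstar T t * f t \<le> 1 * M"
          using f_le kstar_le_one kstar_nonneg \<open>\<bar>t\<bar> \<le> T\<close> by (intro mult_mono) auto
        then show ?thesis by simp
      next
        case False
        then show ?thesis
          using assms(2) mult_nonneg_nonpos[OF kstar_nonneg[of T t], of "f t"] by linarith
      qed
      then show ?thesis
        using True by (auto intro: ennreal_leI simp: indicator_def abs_le_iff)
    qed (simp add: kstar_def)
  qed
  also have "\<dots> = ennreal (2 * T * M)"
    using assms(1,2) by (simp add: nn_integral_cmult_indicator ennreal_mult' mult.commute)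
  finally show ?thesis .
qed

text \<open>The weights \<open>w\<close> and coefficients \<open>a\<close> need no sign condition: the hypothesis on \<open>R\<close>
  already forces \<open>\<mu> * (w k * a k) \<ge> 0\<close>.\<close>

lemma square_suminf_exp_le:
  fixes R r w a :: "nat \<Rightarrow> real"
  assumes r_le: "\<And>k. \<bar>r k\<bar> \<le> \<rho>" and "\<bar>t\<bar> \<le> T"
    and R_le: "\<And>k. \<bar>R k\<bar> \<le> \<mu> * (w k * a k)"
    and sw: "summable (\<lambda>k. (w k)\<^sup>2)" and sa: "summable (\<lambda>k. (a k)\<^sup>2)"
  shows "(\<Sum>k. R k * exp (r k * t))\<^sup>2
           \<le> exp (2 * \<rho> * T) * \<mu>\<^sup>2 * (\<Sum>k. (w k)\<^sup>2) * (\<Sum>k. (a k)\<^sup>2)"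
proof -
  define E where "E = exp (\<rho> * T)"
  have exp_le: "exp (r k * t) \<le> E" for k
  proof -
    have "r k * t \<le> \<bar>r k\<bar> * \<bar>t\<bar>"
      by (simp add: abs_mult[symmetric])
    also have "\<dots> \<le> \<rho> * T"
      using r_le[of k] \<open>\<bar>t\<bar> \<le> T\<close> by (intro mult_mono) auto
    finally show ?thesis
      unfolding E_def by simp
  qed
  have term_le: "norm (R k * exp (r k * t)) \<le> E * (\<mu> * (w k * a k))" for k
  proof -
    have "norm (R k * exp (r k * t)) = \<bar>R k\<bar> * exp (r k * t)"
      by (simp add: abs_mult)
    also have "\<dots> \<le> (\<mu> * (w k * a k)) * E"
      using R_le[of k] exp_le[of k] by (intro mult_mono) auto
    finally show ?thesis
      by (simp add: mult.commute)
  qed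
  have swa: "summable (\<lambda>k. w k * a k)"
    using Cauchy_Schwarz_suminf(1)[OF sw sa] .
  have "\<bar>\<Sum>k. R k * exp (r k * t)\<bar> \<le> (\<Sum>k. E * (\<mu> * (w k * a k)))"
    using norm_suminf_le[OF term_le] swa by (simp add: summable_mult)
  also have "\<dots> = E * \<mu> * (\<Sum>k. w k * a k)"
    using swa by (simp add: suminf_mult mult.assoc)
  finally have "(\<Sum>k. R k * exp (r k * t))\<^sup>2 \<le> (E * \<mu> * (\<Sum>k. w k * a k))\<^sup>2"
    by (metis abs_ge_zero power2_abs power_mono)
  also have "\<dots> = E\<^sup>2 * \<mu>\<^sup>2 * (\<Sum>k. w k * a k)\<^sup>2"
    by (simp add: power_mult_distrib)
  also have "\<dots> \<le> E\<^sup>2 * \<mu>\<^sup>2 * ((\<Sum>k. (w k)\<^sup>2) * (\<Sum>k. (a k)\<^sup>2))"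
    by (intro mult_left_mono Cauchy_Schwarz_suminf(2)[OF sw sa]) auto
  also have "E\<^sup>2 = exp (2 * \<rho> * T)"
    unfolding E_def by (simp add: power2_eq_square exp_add[symmetric])
  finally show ?thesis
    by (simp add: mult.assoc)
qed

lemma nn_integral_kstar_square_suminf_exp_le:
  fixes R r w a :: "nat \<Rightarrow> real"
  assumes "T > 0" and "\<And>k. \<bar>r k\<bar> \<le> \<rho>" and "\<And>k. \<bar>R k\<bar> \<le> \<mu> * (w k * a k)"
    and "summable (\<lambda>k. (w k)\<^sup>2)" and "summable (\<lambda>k. (a k)\<^sup>2)"
  shows "(\<integral>\<^sup>+ t. ennreal (kstar T t * (\<Sum>k. R k * exp (r k * t))\<^sup>2) \<partial>lborel)
           \<le> ennreal (2 * T * (exp (2 * \<rho> * T) * \<mu>\<^sup>2 * (\<Sum>k. (w k)\<^sup>2) * (\<Sum>k. (a k)\<^sup>2)))"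
proof (rule nn_integral_kstar_mult_le[OF \<open>T > 0\<close>])
  show "0 \<le> exp (2 * \<rho> * T) * \<mu>\<^sup>2 * (\<Sum>k. (w k)\<^sup>2) * (\<Sum>k. (a k)\<^sup>2)"
    by (intro mult_nonneg_nonneg suminf_nonneg assms(4,5)) auto
qed (rule square_suminf_exp_le[OF assms(2) _ assms(3-5)])

lemma abs_le_SUP_abs:
  fixes r :: "nat \<Rightarrow> real"
  assumes "bounded (range r)"
  shows "\<bar>r n\<bar> \<le> (SUP n. \<bar>r n\<bar>)"
proof -
  obtain B where "\<And>n. \<bar>r n\<bar> \<le> B"
    using assms unfolding bounded_iff by auto
  then have "bdd_above (range (\<lambda>n. \<bar>r n\<bar>))"
    by (intro bdd_aboveI2) auto
  then show ?thesis
    by (rule cSUP_upper[OF UNIV_I])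
qed

theorem proposition5p13:
  fixes T \<mu> \<nu> \<rho> :: real
  assumes "T > 0" and "\<mu> > 0" and "\<nu> > 1/2"
  shows "\<exists>c>0. \<forall>(r::nat \<Rightarrow> real) (R::nat \<Rightarrow> real) (C::nat \<Rightarrow> complex)
           (D::nat \<Rightarrow> complex) (d::nat \<Rightarrow> complex) (n'::nat).
      bounded (range r) \<longrightarrow>
      (SUP n. \<bar>r n\<bar>) = \<rho> \<longrightarrow>
      summable (\<lambda>n. (cmod (C n))\<^sup>2 + (cmod (d n * D n))\<^sup>2) \<longrightarrow>
      n' \<ge> 1 \<longrightarrow>
      (\<forall>n\<ge>n'. \<bar>R n\<bar> \<le> \<mu> * real n powr (-\<nu>) *
                   sqrt ((cmod (C n))\<^sup>2 + (cmod (d n * D n))\<^sup>2)) \<longrightarrow>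
      (\<forall>n0\<ge>n'.
         (\<integral>\<^sup>+ t. ennreal (kstar T t *
              (\<Sum>k. R (k + n0) * exp (r (k + n0) * t))\<^sup>2) \<partial>lborel)
         \<le> ennreal (c * (\<Sum>k. (cmod (C (k + n0)))\<^sup>2 + (cmod (d (k + n0) * D (k + n0)))\<^sup>2)))"
proof -
  define Z where "Z = (\<Sum>k. real (Suc k) powr (-2 * \<nu>))"
  have "Z > 0"
    unfolding Z_def using assms(3) summable_powr_neg_Suc[of "2 * \<nu>"]
    by (intro suminf_pos) auto
  show ?thesis
  proof (intro exI[of _ "2 * T * (exp (2 * \<rho> * T) * \<mu>\<^sup>2 * Z)"] conjI allI impI)
    show "2 * T * (exp (2 * \<rho> * T) * \<mu>\<^sup>2 * Z) > 0"
      using assms(1,2) \<open>Z > 0\<close> by simp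
    fix r R :: "nat \<Rightarrow> real" and C D d :: "nat \<Rightarrow> complex" and n' n0 :: nat
    assume "bounded (range r)" and "(SUP n. \<bar>r n\<bar>) = \<rho>"
      and summ: "summable (\<lambda>n. (cmod (C n))\<^sup>2 + (cmod (d n * D n))\<^sup>2)" and "n' \<ge> 1"
      and R_le: "\<forall>n\<ge>n'. \<bar>R n\<bar> \<le> \<mu> * real n powr (-\<nu>) *
                   sqrt ((cmod (C n))\<^sup>2 + (cmod (d n * D n))\<^sup>2)"
      and "n0 \<ge> n'"
    define a where "a k = sqrt ((cmod (C (k + n0)))\<^sup>2 + (cmod (d (k + n0) * D (k + n0)))\<^sup>2)" for k
    define w where "w k = real (k + n0) powr (-\<nu>)" for k
    have a2: "(a k)\<^sup>2 = (cmod (C (k + n0)))\<^sup>2 + (cmod (d (k + n0) * D (k + n0)))\<^sup>2" for k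
      by (simp add: a_def)
    have sa: "summable (\<lambda>k. (a k)\<^sup>2)"
      unfolding a2 using summable_ignore_initial_segment[OF summ, of n0] by simp
    have "n0 \<ge> 1" using \<open>n' \<ge> 1\<close> \<open>n0 \<ge> n'\<close> by simp
    note w_bounds = suminf_shifted_powr_square_le[OF assms(3) this, folded w_def Z_def]
    have r_le: "\<bar>r k\<bar> \<le> \<rho>" for k
      using abs_le_SUP_abs[OF \<open>bounded (range r)\<close>] \<open>(SUP n. \<bar>r n\<bar>) = \<rho>\<close> by simp
    have R_shift_le: "\<bar>R (k + n0)\<bar> \<le> \<mu> * (w k * a k)" for k
      using R_le[rule_format, of "k + n0"] \<open>n0 \<ge> n'\<close> unfolding w_def a_def
      by (simp add: mult.assoc)
    have "(\<integral>\<^sup>+ t. ennreal (kstar T t * (\<Sum>k. R (k + n0) * exp (r (k + n0) * t))\<^sup>2) \<partial>lborel)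
            \<le> ennreal (2 * T * (exp (2 * \<rho> * T) * \<mu>\<^sup>2 * (\<Sum>k. (w k)\<^sup>2) * (\<Sum>k. (a k)\<^sup>2)))"
      by (rule nn_integral_kstar_square_suminf_exp_le[OF assms(1) r_le R_shift_le w_bounds(1) sa])
    also have "\<dots> \<le> ennreal (2 * T * (exp (2 * \<rho> * T) * \<mu>\<^sup>2 * Z) *
                   (\<Sum>k. (cmod (C (k + n0)))\<^sup>2 + (cmod (d (k + n0) * D (k + n0)))\<^sup>2))"
      using assms(1) w_bounds(2) suminf_nonneg[OF sa]
      by (intro ennreal_leI) (auto simp: a2 mult.assoc intro!: mult_left_mono mult_right_mono)
    finally show "(\<integral>\<^sup>+ t. ennreal (kstar T t * (\<Sum>k. R (k + n0) * exp (r (k + n0) * t))\<^sup>2) \<partial>lborel)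
        \<le> ennreal (2 * T * (exp (2 * \<rho> * T) * \<mu>\<^sup>2 * Z) *
                   (\<Sum>k. (cmod (C (k + n0)))\<^sup>2 + (cmod (d (k + n0) * D (k + n0)))\<^sup>2))" .
  qed
qed

end
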